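(* Let $\alpha>-1$ and let $\phi(w)=aw+b$ with $a>0$ and $\mathrm{Re}(b)\ge 0$. Then $C_\phi$ is absolutely Cesàro bounded on $\mathcal{A}^2_\alpha(\mathbb{C}_+)$ if and only if $a\ge 1$.
   Context: $\mathbb{N}$ denotes the positive integers. $\mathbb{C}_+=\{z\in\mathbb{C}:\mathrm{Re}(z)>0\}$. For $\alpha>-1$, $\mathcal{A}^2_\alpha(\mathbb{C}_+)$ is the Hilbert space of analytic $f:\mathbb{C}_+\to\mathbb{C}$ with $\|f\|^2=\frac{1}{\pi}\int_{-\infty}^{\infty}\int_0^\infty |f(x+iy)|^2x^\alpha\,dx\,dy<\infty$. $C_\phi f=f\circ\phi$ is the (bounded) composition operator. A bounded operator $T$ on a Banach space $X$ is absolutely Cesàro bounded if there is $M>0$ such that $\sup_{n\in\mathbb{N}}\frac{1}{n}\sum_{j=1}^n\|T^jx\|\le M\|x\|$ for all $x\in X$. *)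

theory Defs
  imports "HOL-Analysis.Analysis"
begin

definition C_plus :: "complex set" where
  "C_plus = {z. Re z > 0}"

definition bergman_norm2 :: "real \<Rightarrow> (complex \<Rightarrow> complex) \<Rightarrow> ennreal" where
  "bergman_norm2 \<alpha> f =
     ennreal (1 / pi) *
     (\<integral>\<^sup>+ z. indicator C_plus z * ennreal ((cmod (f z))\<^sup>2 * (Re z) powr \<alpha>) \<partial>lborel)"

definition bergman_space :: "real \<Rightarrow> (complex \<Rightarrow> complex) set" where
  "bergman_space \<alpha> = {f. f holomorphic_on C_plus \<and> bergman_norm2 \<alpha> f < \<infinity>}"

definition bergman_norm :: "real \<Rightarrow> (complex \<Rightarrow> complex) \<Rightarrow> real" where
  "bergman_norm \<alpha> f = sqrt (enn2real (bergman_norm2 \<alpha> f))"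

definition abs_cesaro_bounded ::
  "'a set \<Rightarrow> ('a \<Rightarrow> real) \<Rightarrow> ('a \<Rightarrow> 'a) \<Rightarrow> bool" where
  "abs_cesaro_bounded X nrm T \<longleftrightarrow>
     (\<exists>M>0. \<forall>x\<in>X. \<forall>n::nat. n \<ge> 1 \<longrightarrow>
        (1 / real n) * (\<Sum>j=1..n. nrm ((T ^^ j) x)) \<le> M * nrm x)"

definition comp_op :: "(complex \<Rightarrow> complex) \<Rightarrow> (complex \<Rightarrow> complex) \<Rightarrow> (complex \<Rightarrow> complex)" where
  "comp_op \<phi> f = f \<circ> \<phi>"

end

theory Submission
  imports Defs "HOL-Complex_Analysis.Complex_Analysis" "HOL-Probability.Sinc_Integral"
begin

(*
  Write Phi_f(x) = int |f(x + iy)|^2 dy (line_energy f x) for the energy of f on the line Re z = x,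
  so that ||f||^2 = (1/pi) int_0^oo x^alpha Phi_f(x) dx. The iterates of phi(w) = a w + b are
  w -> a^j w + c_j with t_j = Re c_j >= 0, and a change of variables gives
  a^(j(2+alpha)) ||f o phi^j||^2 = (1/pi) int_{t_j}^oo (u - t_j)^alpha Phi_f(u) du.
  Cauchy's formula for f^2 on squares bounds Phi_f(u), for t < u < 2t, by 4/t times the integral
  of Phi_f over [t/2, 5t/2]. This tames the singularity of (u - t)^alpha when alpha < 0 and gives
  int_t^oo (u - t)^alpha Phi_f <= K int_0^oo u^alpha Phi_f with K = 2 + 10/(alpha + 1) for all t >= 0.
  Hence for a >= 1 every power of C_phi has norm at most sqrt K. For a < 1 the shifts t_j stay
  below Re b / (1 - a), so for f(z) = exp(-z) / (z + 1) the right-hand side stays bounded below and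
  ||C_phi^j f|| grows like a^(-j(2+alpha)/2), which no Cesaro bound n M ||f|| can absorb.
*)

section \<open>Absolute Cesaro boundedness\<close>

lemma abs_cesaro_boundedI_power_bounded:
  assumes C: "0 < C" and bound: "\<And>x j. x \<in> X \<Longrightarrow> 1 \<le> j \<Longrightarrow> nrm ((T ^^ j) x) \<le> C * nrm x"
  shows "abs_cesaro_bounded X nrm T"
  unfolding abs_cesaro_bounded_def
proof (intro exI[of _ C] conjI ballI allI impI C)
  fix x and n :: nat
  assume "x \<in> X" and n: "1 \<le> n"
  have "(\<Sum>j=1..n. nrm ((T ^^ j) x)) \<le> real (card {1..n}) * (C * nrm x)"
    using bound[OF \<open>x \<in> X\<close>] by (intro sum_bounded_above) auto
  then show "1 / real n * (\<Sum>j=1..n. nrm ((T ^^ j) x)) \<le> C * nrm x"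
    using n by (simp add: field_simps)
qed

lemma not_abs_cesaro_bounded_exponential_orbit:
  assumes x: "x \<in> X" and c: "0 < c" and q: "1 < q"
    and grow: "\<And>j. c * q ^ j \<le> nrm ((T ^^ j) x)"
  shows "\<not> abs_cesaro_bounded X nrm T"
proof
  assume "abs_cesaro_bounded X nrm T"
  then obtain M where M: "\<And>n. 1 \<le> n \<Longrightarrow> 1 / real n * (\<Sum>j=1..n. nrm ((T ^^ j) x)) \<le> M * nrm x"
    using x unfolding abs_cesaro_bounded_def by blast
  have "((\<lambda>n. M * nrm x * (real n / q ^ n)) \<longlongrightarrow> M * nrm x * 0) sequentially"
    using q by (intro tendsto_mult tendsto_const lim_n_over_pown) auto
  then have "\<forall>\<^sub>F n in sequentially. M * nrm x * (real n / q ^ n) < c"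
    using c by (intro order_tendstoD(2)) auto
  then obtain N where N: "\<And>n. N \<le> n \<Longrightarrow> M * nrm x * (real n / q ^ n) < c"
    by (auto simp: eventually_sequentially)
  define n where "n = Suc N"
  have "c * q ^ n \<le> nrm ((T ^^ n) x)"
    by (rule grow)
  also have "\<dots> \<le> (\<Sum>j=1..n. nrm ((T ^^ j) x))"
  proof (rule member_le_sum)
    fix j
    have "0 \<le> c * q ^ j"
      using c q by simp
    then show "0 \<le> nrm ((T ^^ j) x)"
      using grow[of j] by linarith
  qed (simp_all add: n_def)
  also have "\<dots> \<le> real n * (M * nrm x)"
    using M[of n] by (simp add: n_def field_simps)
  finally have "c \<le> M * nrm x * (real n / q ^ n)"
    using q by (simp add: field_simps)
  with N[of n] show False by (simp add: n_def)
qed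

section \<open>A Cauchy estimate on squares\<close>

lemma contour_integral_linepath_sq_div_bound:
  fixes f :: "complex \<Rightarrow> complex"
  assumes cont: "continuous_on (closed_segment a b) f"
    and dist: "\<And>t. t \<in> {0..1} \<Longrightarrow> s \<le> cmod (linepath a b t - z)"
    and len: "cmod (b - a) = 2 * s" and s: "s > 0"
  obtains I where "((\<lambda>w. (f w)^2 / (w - z)) has_contour_integral I) (linepath a b)"
    and "cmod I \<le> 2 * integral {0..1} (\<lambda>t. (cmod (f (linepath a b t)))^2)"
proof -
  let ?h = "\<lambda>w. (f w)^2 / (w - z)"
  have "z \<notin> closed_segment a b"
  proof
    assume "z \<in> closed_segment a b"
    then obtain t where "t \<in> {0..1}" "z = linepath a b t"
      by (metis imageE linepath_image_01)
    with dist[of t] s show False by simp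
  qed
  then have "continuous_on (closed_segment a b) ?h"
    by (intro continuous_intros cont) auto
  then obtain I where I: "(?h has_contour_integral I) (linepath a b)"
    using contour_integrable_continuous_linepath has_contour_integral_integral by blast
  then have I': "((\<lambda>t. ?h (linepath a b t) * (b - a)) has_integral I) {0..1}"
    by (simp add: has_contour_integral_linepath)
  have fl: "continuous_on {0..1} (\<lambda>t. f (linepath a b t))"
    by (rule continuous_on_compose2[OF cont]) (auto intro: continuous_intros simp: linepath_in_path)
  have "cmod (integral {0..1} (\<lambda>t. ?h (linepath a b t) * (b - a)))
      \<le> integral {0..1} (\<lambda>t. 2 * (cmod (f (linepath a b t)))^2)"
  proof (rule integral_norm_bound_integral)
    show "(\<lambda>t. ?h (linepath a b t) * (b - a)) integrable_on {0..1}"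
      using I' by blast
    show "(\<lambda>t. 2 * (cmod (f (linepath a b t)))^2) integrable_on {0..1}"
      using fl by (intro integrable_continuous_interval continuous_intros)
    fix t :: real
    assume "t \<in> {0..1}"
    then have "s \<le> cmod (linepath a b t - z)" by (rule dist)
    then have "(cmod (f (linepath a b t)))^2 * (2 * s) / cmod (linepath a b t - z)
        \<le> (cmod (f (linepath a b t)))^2 * (2 * s) / s"
      using s by (intro divide_left_mono) (auto intro!: mult_pos_pos)
    then show "cmod (?h (linepath a b t) * (b - a)) \<le> 2 * (cmod (f (linepath a b t)))^2"
      using s by (simp add: norm_mult norm_divide norm_power len)
  qed
  then show thesis
    using that I I'[THEN integral_unique] by simp
qed

lemma has_contour_integral_sq_div_rectpath:
  assumes holo: "f holomorphic_on C_plus" and s: "0 < s" "s < x"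
  shows "((\<lambda>w. (f w)^2 / (w - Complex x y)) has_contour_integral 2 * pi * \<i> * (f (Complex x y))^2)
           (rectpath (Complex (x - s) (y - s)) (Complex (x + s) (y + s)))"
proof -
  let ?z = "Complex x y" and ?a = "Complex (x - s) (y - s)" and ?b = "Complex (x + s) (y + s)"
  have zbox: "?z \<in> box ?a ?b"
    using s by (simp add: in_box_complex_iff)
  have "((\<lambda>w. (f w)^2 / (w - ?z)) has_contour_integral
          2 * pi * \<i> * winding_number (rectpath ?a ?b) ?z * (f ?z)^2) (rectpath ?a ?b)"
  proof (rule Cauchy_integral_formula_convex_simple)
    show "convex C_plus" unfolding C_plus_def by (rule convex_halfspace_Re_gt)
    show "(\<lambda>w. (f w)^2) holomorphic_on C_plus" using holo by (intro holomorphic_intros)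
    show "?z \<in> interior C_plus"
      using s by (simp add: C_plus_def interior_open open_halfspace_Re_gt)
    have "cbox ?a ?b \<subseteq> C_plus"
      using s by (auto simp: in_cbox_complex_iff C_plus_def)
    then show "path_image (rectpath ?a ?b) \<subseteq> C_plus - {?z}"
      using s zbox by (auto simp: path_image_rectpath_cbox_minus_box)
  qed auto
  then show ?thesis
    using winding_number_rectpath[OF zbox] by simp
qed

lemma has_contour_integral_sq_div_square_sides:
  fixes f :: "complex \<Rightarrow> complex" and x y s :: real
  assumes holo: "f holomorphic_on C_plus" and s: "0 < s" "s < x"
    and bottom: "((\<lambda>w. (f w)^2 / (w - Complex x y)) has_contour_integral I1)
                   (linepath (Complex (x - s) (y - s)) (Complex (x + s) (y - s)))"
    and top: "((\<lambda>w. (f w)^2 / (w - Complex x y)) has_contour_integral I2)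
                (linepath (Complex (x - s) (y + s)) (Complex (x + s) (y + s)))"
    and left: "((\<lambda>w. (f w)^2 / (w - Complex x y)) has_contour_integral I3)
                 (linepath (Complex (x - s) (y - s)) (Complex (x - s) (y + s)))"
    and right: "((\<lambda>w. (f w)^2 / (w - Complex x y)) has_contour_integral I4)
                  (linepath (Complex (x + s) (y - s)) (Complex (x + s) (y + s)))"
  shows "2 * pi * \<i> * (f (Complex x y))^2 = I1 + (I4 + (- I2 + - I3))"
proof -
  have "rectpath (Complex (x - s) (y - s)) (Complex (x + s) (y + s))
      = linepath (Complex (x - s) (y - s)) (Complex (x + s) (y - s))
        +++ linepath (Complex (x + s) (y - s)) (Complex (x + s) (y + s))
        +++ reversepath (linepath (Complex (x - s) (y + s)) (Complex (x + s) (y + s)))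
        +++ reversepath (linepath (Complex (x - s) (y - s)) (Complex (x - s) (y + s)))"
    by (simp add: rectpath_def Let_def)
  then have "((\<lambda>w. (f w)^2 / (w - Complex x y)) has_contour_integral I1 + (I4 + (- I2 + - I3)))
      (rectpath (Complex (x - s) (y - s)) (Complex (x + s) (y + s)))"
    by (simp only:)
       (intro has_contour_integral_join has_contour_integral_reversepath bottom top left right
          valid_path_join valid_path_linepath valid_path_reversepath; simp)
  then show ?thesis
    using has_contour_integral_sq_div_rectpath[OF holo s] by (rule has_contour_integral_unique[rotated])
qed

text \<open>Cauchy's formula for \<open>f\<^sup>2\<close> on the square of half-side \<open>s\<close> centred at \<open>x + iy\<close>: each side
  has length \<open>2s\<close> and stays at distance at least \<open>s\<close> from the centre.\<close>

lemma norm_sq_le_square_sides: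
  fixes f :: "complex \<Rightarrow> complex" and x y s :: real
  assumes holo: "f holomorphic_on C_plus" and s: "0 < s" "s < x"
  defines "H \<equiv> \<lambda>y'. integral {0..1} (\<lambda>t. (cmod (f (Complex (x - s + 2 * s * t) y')))^2)"
    and "V \<equiv> \<lambda>x'. integral {0..1} (\<lambda>t. (cmod (f (Complex x' (y - s + 2 * s * t))))^2)"
  shows "(cmod (f (Complex x y)))^2 \<le> (H (y - s) + H (y + s) + V (x - s) + V (x + s)) / pi"
proof -
  define z where "z = Complex x y"
  define a1 where "a1 = Complex (x - s) (y - s)"
  define a2 where "a2 = Complex (x + s) (y - s)"
  define a3 where "a3 = Complex (x + s) (y + s)"
  define a4 where "a4 = Complex (x - s) (y + s)"
  have side: "\<exists>I. ((\<lambda>w. (f w)^2 / (w - z)) has_contour_integral I) (linepath a b) \<and>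
                 cmod I \<le> 2 * integral {0..1} (\<lambda>t. (cmod (f (linepath a b t)))^2)"
    if "a \<in> {a1, a2, a3, a4}" "b \<in> {a1, a2, a3, a4}" "\<And>t. s \<le> cmod (linepath a b t - z)"
      "b - a \<in> {of_real (2 * s), \<i> * of_real (2 * s)}" for a b
  proof -
    have "closed_segment a b \<subseteq> C_plus"
      using that(1,2) s by (intro closed_segment_subset)
        (auto simp: C_plus_def convex_halfspace_Re_gt a1_def a2_def a3_def a4_def)
    then have "continuous_on (closed_segment a b) f"
      using holo holomorphic_on_imp_continuous_on continuous_on_subset by blast
    moreover have "cmod (b - a) = 2 * s"
      using that(4) s by (auto simp: norm_mult)
    ultimately show ?thesis
      using contour_integral_linepath_sq_div_bound[of a b f s z] that(3) s(1) by blast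
  qed
  have path12: "linepath a1 a2 t = Complex (x - s + 2 * s * t) (y - s)"
    and path43: "linepath a4 a3 t = Complex (x - s + 2 * s * t) (y + s)"
    and path14: "linepath a1 a4 t = Complex (x - s) (y - s + 2 * s * t)"
    and path23: "linepath a2 a3 t = Complex (x + s) (y - s + 2 * s * t)" for t
    by (simp_all add: linepath_def a1_def a2_def a3_def a4_def complex_eq_iff algebra_simps)
  have diff: "a2 - a1 = of_real (2 * s)" "a3 - a4 = of_real (2 * s)"
    "a4 - a1 = \<i> * of_real (2 * s)" "a3 - a2 = \<i> * of_real (2 * s)"
    by (simp_all add: a1_def a2_def a3_def a4_def complex_eq_iff)
  have dist: "s \<le> cmod (linepath a1 a2 t - z)" "s \<le> cmod (linepath a4 a3 t - z)"
    "s \<le> cmod (linepath a1 a4 t - z)" "s \<le> cmod (linepath a2 a3 t - z)" for t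
    using abs_Im_le_cmod[of "linepath a1 a2 t - z"] abs_Im_le_cmod[of "linepath a4 a3 t - z"]
      abs_Re_le_cmod[of "linepath a1 a4 t - z"] abs_Re_le_cmod[of "linepath a2 a3 t - z"] s
    by (simp_all add: path12 path43 path14 path23 z_def)
  obtain I1 where I1: "((\<lambda>w. (f w)^2 / (w - z)) has_contour_integral I1) (linepath a1 a2)"
      "cmod I1 \<le> 2 * H (y - s)"
    using side[of a1 a2] dist(1) diff(1) by (auto simp: path12 H_def)
  obtain I2 where I2: "((\<lambda>w. (f w)^2 / (w - z)) has_contour_integral I2) (linepath a4 a3)"
      "cmod I2 \<le> 2 * H (y + s)"
    using side[of a4 a3] dist(2) diff(2) by (auto simp: path43 H_def)
  obtain I3 where I3: "((\<lambda>w. (f w)^2 / (w - z)) has_contour_integral I3) (linepath a1 a4)"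
      "cmod I3 \<le> 2 * V (x - s)"
    using side[of a1 a4] dist(3) diff(3) by (auto simp: path14 V_def)
  obtain I4 where I4: "((\<lambda>w. (f w)^2 / (w - z)) has_contour_integral I4) (linepath a2 a3)"
      "cmod I4 \<le> 2 * V (x + s)"
    using side[of a2 a3] dist(4) diff(4) by (auto simp: path23 V_def)
  have "2 * pi * (cmod (f z))^2 = cmod (2 * pi * \<i> * (f z)^2)"
    by (simp add: norm_mult norm_power)
  also have "2 * pi * \<i> * (f z)^2 = I1 + (I4 + (- I2 + - I3))"
    using I1(1) I2(1) I3(1) I4(1) unfolding z_def a1_def a2_def a3_def a4_def
    by (rule has_contour_integral_sq_div_square_sides[OF holo s])
  also have "cmod \<dots> \<le> cmod I1 + cmod I2 + cmod I3 + cmod I4"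
    using norm_triangle_ineq[of I1 "I4 + (- I2 + - I3)"] norm_triangle_ineq[of I4 "- I2 + - I3"]
      norm_triangle_ineq[of "- I2" "- I3"] by simp
  finally show ?thesis
    using I1(2) I2(2) I3(2) I4(2) by (simp add: z_def field_simps)
qed

section \<open>Energy on vertical lines\<close>

lemma measurable_Complex [measurable (raw)]:
  assumes [measurable]: "f \<in> borel_measurable M" "g \<in> borel_measurable M"
  shows "(\<lambda>x. Complex (f x) (g x)) \<in> borel_measurable M"
proof -
  have "(\<lambda>x. Complex (f x) (g x)) = (\<lambda>x. of_real (f x) + \<i> * of_real (g x))"
    by (auto simp: Complex_eq)
  then show ?thesis by simp
qed

lemma lborel_complex_eq_distr:
  "(lborel :: complex measure) = distr (lborel \<Otimes>\<^sub>M lborel) borel (\<lambda>p. Complex (fst p) (snd p))"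
proof (rule lborel_eqI)
  fix l u :: complex
  assume le_Basis: "\<And>b. b \<in> Basis \<Longrightarrow> l \<bullet> b \<le> u \<bullet> b"
  have le: "Re l \<le> Re u" "Im l \<le> Im u"
    using le_Basis[of 1] le_Basis[of \<i>] by (auto simp: Basis_complex_def)
  have "(\<lambda>p. Complex (fst p) (snd p)) -` box l u \<inter> space (lborel \<Otimes>\<^sub>M lborel)
     = {Re l<..<Re u} \<times> {Im l<..<Im u}"
    by (auto simp: in_box_complex_iff space_pair_measure)
  then have "emeasure (distr (lborel \<Otimes>\<^sub>M lborel) borel (\<lambda>p. Complex (fst p) (snd p))) (box l u)
      = emeasure (lborel \<Otimes>\<^sub>M lborel) ({Re l<..<Re u} \<times> {Im l<..<Im u})"
    by (subst emeasure_distr) auto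
  also have "\<dots> = (\<Prod>b\<in>Basis. (u - l) \<bullet> b)"
    using le by (simp add: lborel.emeasure_pair_measure_Times Basis_complex_def ennreal_mult)
  finally show "emeasure (distr (lborel \<Otimes>\<^sub>M lborel) borel (\<lambda>p. Complex (fst p) (snd p))) (box l u)
      = (\<Prod>b\<in>Basis. (u - l) \<bullet> b)" .
qed simp

lemma nn_integral_lborel_complex:
  assumes [measurable]: "h \<in> borel_measurable borel"
  shows "(\<integral>\<^sup>+z. h z \<partial>lborel) = (\<integral>\<^sup>+x. \<integral>\<^sup>+y. h (Complex x y) \<partial>lborel \<partial>lborel)"
  by (subst lborel_complex_eq_distr)
     (simp add: nn_integral_distr lborel.nn_integral_fst[symmetric])

text \<open>The indicator keeps the density zero off the half-plane, where \<open>f\<close> is unconstrained.\<close>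

definition energy_density :: "(complex \<Rightarrow> complex) \<Rightarrow> complex \<Rightarrow> real" where
  "energy_density f z = indicator C_plus z * (cmod (f z))^2"

definition line_energy :: "(complex \<Rightarrow> complex) \<Rightarrow> real \<Rightarrow> ennreal" where
  "line_energy f x = (\<integral>\<^sup>+y. ennreal (energy_density f (Complex x y)) \<partial>lborel)"

definition weighted_energy :: "real \<Rightarrow> real \<Rightarrow> (complex \<Rightarrow> complex) \<Rightarrow> ennreal" where
  "weighted_energy \<alpha> t f =
     (\<integral>\<^sup>+u. ennreal (indicator {t<..} u * (u - t) powr \<alpha>) * line_energy f u \<partial>lborel)"

lemma C_plus_borel [measurable]: "C_plus \<in> sets borel"
  unfolding C_plus_def by (intro borel_open open_halfspace_Re_gt)

lemma energy_density_nonneg: "0 \<le> energy_density f z"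
  by (simp add: energy_density_def)

lemma energy_density_C_plus: "0 < Re z \<Longrightarrow> energy_density f z = (cmod (f z))^2"
  by (simp add: energy_density_def C_plus_def)

lemma borel_measurable_energy_density:
  assumes "f holomorphic_on C_plus"
  shows "energy_density f \<in> borel_measurable borel"
proof -
  have "continuous_on C_plus (\<lambda>z. (cmod (f z))^2)"
    using assms by (intro continuous_intros holomorphic_on_imp_continuous_on)
  from borel_measurable_continuous_on_indicator[OF C_plus_borel this]
  show ?thesis by (simp add: energy_density_def[abs_def])
qed

lemma borel_measurable_line_energy:
  assumes "f holomorphic_on C_plus"
  shows "line_energy f \<in> borel_measurable borel"
  using borel_measurable_energy_density[OF assms] unfolding line_energy_def[abs_def] by measurable

lemma line_energy_translate:
  assumes "f holomorphic_on C_plus"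
  shows "(\<integral>\<^sup>+y. ennreal (energy_density f (Complex x (c + y))) \<partial>lborel) = line_energy f x"
  using borel_measurable_energy_density[OF assms]
    nn_integral_real_affine[of "\<lambda>y. ennreal (energy_density f (Complex x y))" 1 c]
  by (simp add: line_energy_def)

lemma bergman_norm2_eq_weighted_energy:
  assumes "f holomorphic_on C_plus"
  shows "bergman_norm2 \<alpha> f = ennreal (1/pi) * weighted_energy \<alpha> 0 f"
proof -
  note [measurable] = borel_measurable_energy_density[OF assms]
  have "(\<integral>\<^sup>+z. indicator C_plus z * ennreal ((cmod (f z))^2 * (Re z) powr \<alpha>) \<partial>lborel)
     = (\<integral>\<^sup>+z. ennreal (energy_density f z * (Re z) powr \<alpha>) \<partial>lborel)"
    by (intro nn_integral_cong) (auto simp: energy_density_def indicator_def)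
  also have "\<dots> = (\<integral>\<^sup>+x. \<integral>\<^sup>+y. ennreal (energy_density f (Complex x y) * x powr \<alpha>) \<partial>lborel \<partial>lborel)"
    by (subst nn_integral_lborel_complex) auto
  also have "\<dots> = weighted_energy \<alpha> 0 f"
    unfolding weighted_energy_def
  proof (intro nn_integral_cong)
    fix x :: real
    show "(\<integral>\<^sup>+y. ennreal (energy_density f (Complex x y) * x powr \<alpha>) \<partial>lborel)
        = ennreal (indicator {0<..} x * (x - 0) powr \<alpha>) * line_energy f x"
    proof (cases "x > 0")
      case True
      then show ?thesis
        unfolding line_energy_def
        by (subst nn_integral_cmult[symmetric])
           (auto simp: ennreal_mult' energy_density_nonneg mult.commute intro!: nn_integral_cong)
    next
      case False
      then show ?thesis by (simp add: energy_density_def C_plus_def)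
    qed
  qed
  finally show ?thesis unfolding bergman_norm2_def by simp
qed

lemma nn_integral_energy_density_path:
  fixes p :: "real \<Rightarrow> complex"
  assumes holo: "f holomorphic_on C_plus" and p: "continuous_on {0..1} p"
    and Re_p: "\<And>t. t \<in> {0..1} \<Longrightarrow> 0 < Re (p t)"
  shows "(\<integral>\<^sup>+t. ennreal (energy_density f (p t)) * indicator {0..1} t \<partial>lborel)
         = ennreal (integral {0..1} (\<lambda>t. (cmod (f (p t)))^2))"
proof -
  have "p ` {0..1} \<subseteq> C_plus" using Re_p by (auto simp: C_plus_def)
  with holo p have "continuous_on {0..1} (\<lambda>t. (cmod (f (p t)))^2)"
    by (intro continuous_intros continuous_on_compose2[OF holomorphic_on_imp_continuous_on[OF holo] p])
  then have int: "((\<lambda>t. (cmod (f (p t)))^2) has_integral integral {0..1} (\<lambda>t. (cmod (f (p t)))^2)) {0..1}"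
    by (intro integrable_integral integrable_continuous_interval)
  have "(\<integral>\<^sup>+t. ennreal (energy_density f (p t)) * indicator {0..1} t \<partial>lborel)
      = (\<integral>\<^sup>+t. ennreal ((cmod (f (p t)))^2) * indicator {0..1} t \<partial>lborel)"
    by (intro nn_integral_cong) (auto simp: indicator_def energy_density_C_plus Re_p)
  also have "\<dots> = ennreal (integral {0..1} (\<lambda>t. (cmod (f (p t)))^2))"
    by (rule nn_integral_has_integral_lebesgue'[OF _ int]) simp
  finally show ?thesis .
qed

lemma energy_density_le_square_sides:
  fixes x y s :: real
  assumes holo: "f holomorphic_on C_plus" and s: "0 < s" "s < x"
  defines "H \<equiv> \<lambda>y'. \<integral>\<^sup>+t. ennreal (energy_density f (Complex (x - s + 2 * s * t) y')) * indicator {0..1} t \<partial>lborel"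
    and "V \<equiv> \<lambda>x'. \<integral>\<^sup>+t. ennreal (energy_density f (Complex x' (y - s + 2 * s * t))) * indicator {0..1} t \<partial>lborel"
  shows "ennreal (energy_density f (Complex x y))
           \<le> ennreal (1/pi) * (H (y - s) + H (y + s) + V (x - s) + V (x + s))"
proof -
  let ?H = "\<lambda>y'. integral {0..1} (\<lambda>t. (cmod (f (Complex (x - s + 2 * s * t) y')))^2)"
  let ?V = "\<lambda>x'. integral {0..1} (\<lambda>t. (cmod (f (Complex x' (y - s + 2 * s * t))))^2)"
  have H: "H y' = ennreal (?H y')" for y'
  proof -
    have "0 < x - s + 2 * s * t" if "t \<in> {0..1}" for t
      using that s by (auto intro!: add_pos_nonneg)
    then show ?thesis
      unfolding H_def using s by (intro nn_integral_energy_density_path holo) (auto intro!: continuous_intros)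
  qed
  have V: "V x' = ennreal (?V x')" if "0 < x'" for x'
    unfolding V_def using that by (intro nn_integral_energy_density_path holo) (auto intro!: continuous_intros)
  have nonneg: "0 \<le> integral {0..1} (\<lambda>t. (cmod (g t))^2)" for g :: "real \<Rightarrow> complex"
    by (cases "(\<lambda>t. (cmod (g t))^2) integrable_on {0..1}")
       (auto intro: integral_nonneg simp: not_integrable_integral)
  have "energy_density f (Complex x y) \<le> (1/pi) * (?H (y - s) + ?H (y + s) + ?V (x - s) + ?V (x + s))"
    using norm_sq_le_square_sides[OF holo s, of y] s by (simp add: energy_density_C_plus)
  then have "ennreal (energy_density f (Complex x y))
      \<le> ennreal (1/pi) * ennreal (?H (y - s) + ?H (y + s) + ?V (x - s) + ?V (x + s))"
    by (simp add: ennreal_mult'[symmetric] ennreal_leI)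
  also have "\<dots> = ennreal (1/pi) * (H (y - s) + H (y + s) + V (x - s) + V (x + s))"
    using s by (simp add: H V nonneg ennreal_plus)
  finally show ?thesis .
qed

lemma nn_integral_energy_density_swap:
  assumes holo: "f holomorphic_on C_plus"
    and [measurable]: "p \<in> borel_measurable borel" "q \<in> borel_measurable borel"
      "w \<in> borel_measurable borel"
  shows "(\<integral>\<^sup>+y. \<integral>\<^sup>+t. ennreal (energy_density f (Complex (p t) (q t + y))) * w t \<partial>lborel \<partial>lborel)
       = (\<integral>\<^sup>+t. line_energy f (p t) * w t \<partial>lborel)"
proof -
  note [measurable] = borel_measurable_energy_density[OF holo]
  have "(\<lambda>(t, y). ennreal (energy_density f (Complex (p t) (q t + y))) * w t)
      \<in> borel_measurable (lborel \<Otimes>\<^sub>M lborel)"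
    by measurable
  from lborel_pair.Fubini[OF this]
  have "(\<integral>\<^sup>+y. \<integral>\<^sup>+t. ennreal (energy_density f (Complex (p t) (q t + y))) * w t \<partial>lborel \<partial>lborel)
      = (\<integral>\<^sup>+t. \<integral>\<^sup>+y. ennreal (energy_density f (Complex (p t) (q t + y))) * w t \<partial>lborel \<partial>lborel)"
    by simp
  also have "\<dots> = (\<integral>\<^sup>+t. (\<integral>\<^sup>+y. ennreal (energy_density f (Complex (p t) (q t + y))) \<partial>lborel) * w t \<partial>lborel)"
    by (intro nn_integral_cong nn_integral_multc) measurable
  finally show ?thesis
    by (simp add: line_energy_translate[OF holo])
qed

lemma nn_integral_line_energy_rescale:
  assumes holo: "f holomorphic_on C_plus" and c: "0 < c"
  shows "(\<integral>\<^sup>+t. line_energy f (a + c * t) * indicator {0..1} t \<partial>lborel)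
       = ennreal (1 / c) * (\<integral>\<^sup>+u. line_energy f u * indicator {a..a + c} u \<partial>lborel)"
proof -
  note [measurable] = borel_measurable_line_energy[OF holo]
  have "indicator {a..a + c} (a + c * t) = (indicator {0..1} t :: ennreal)" for t
    using c by (auto simp: indicator_def mult_le_cancel_left1 zero_le_mult_iff)
  then have "(\<integral>\<^sup>+u. line_energy f u * indicator {a..a + c} u \<partial>lborel)
      = ennreal c * (\<integral>\<^sup>+t. line_energy f (a + c * t) * indicator {0..1} t \<partial>lborel)"
    using nn_integral_real_affine[of "\<lambda>u. line_energy f u * indicator {a..a + c} u" c a] c by simp
  moreover have "ennreal (1 / c) * ennreal c = 1"
    using c by (simp flip: ennreal_mult)
  ultimately show ?thesis
    by (simp add: mult.assoc[symmetric])
qed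

lemma line_energy_submean:
  assumes holo: "f holomorphic_on C_plus" and s: "0 < s" "s < x"
  shows "line_energy f x \<le> ennreal (1/pi) * (line_energy f (x + s) + line_energy f (x - s) +
           ennreal (1/s) * (\<integral>\<^sup>+u. line_energy f u * indicator {x - s..x + s} u \<partial>lborel))"
proof -
  note [measurable] = borel_measurable_energy_density[OF holo]
  define J where "J = (\<integral>\<^sup>+u. line_energy f u * indicator {x - s..x + s} u \<partial>lborel)"
  define H where "H y' = (\<integral>\<^sup>+t. ennreal (energy_density f (Complex (x - s + 2 * s * t) y')) * indicator {0..1} t \<partial>lborel)" for y'
  define V where "V x' y = (\<integral>\<^sup>+t. ennreal (energy_density f (Complex x' (y - s + 2 * s * t))) * indicator {0..1} t \<partial>lborel)" for x' y
  have int_H: "(\<integral>\<^sup>+y. H (y + c) \<partial>lborel) = ennreal (1 / (2 * s)) * J" for c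
  proof -
    have "(\<integral>\<^sup>+y. H (y + c) \<partial>lborel) = (\<integral>\<^sup>+t. line_energy f ((x - s) + (2 * s) * t) * indicator {0..1} t \<partial>lborel)"
      using nn_integral_energy_density_swap[OF holo, of "\<lambda>t. x - s + 2 * s * t" "\<lambda>t. c"]
      by (simp add: H_def add.commute)
    also have "\<dots> = ennreal (1 / (2 * s)) * J"
      using nn_integral_line_energy_rescale[OF holo, of "2 * s" "x - s"] s by (simp add: J_def add.commute)
    finally show ?thesis .
  qed
  have int_V: "(\<integral>\<^sup>+y. V x' y \<partial>lborel) = line_energy f x'" for x'
  proof -
    have "V x' = (\<lambda>y. \<integral>\<^sup>+t. ennreal (energy_density f (Complex x' ((2 * s * t - s) + y))) * indicator {0..1} t \<partial>lborel)"
      by (intro ext nn_integral_cong) (simp add: V_def algebra_simps)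
    then show ?thesis
      using nn_integral_energy_density_swap[OF holo, of "\<lambda>t. x'" "\<lambda>t. 2 * s * t - s"]
      by (simp add: nn_integral_cmult_indicator)
  qed
  have "line_energy f x \<le> (\<integral>\<^sup>+y. ennreal (1/pi) * (H (y - s) + H (y + s) + V (x - s) y + V (x + s) y) \<partial>lborel)"
    unfolding line_energy_def H_def V_def
    by (intro nn_integral_mono energy_density_le_square_sides[OF holo s])
  also have "\<dots> = ennreal (1/pi) * ((\<integral>\<^sup>+y. H (y + - s) \<partial>lborel) + (\<integral>\<^sup>+y. H (y + s) \<partial>lborel)
      + (\<integral>\<^sup>+y. V (x - s) y \<partial>lborel) + (\<integral>\<^sup>+y. V (x + s) y \<partial>lborel))"
    by (simp add: H_def V_def nn_integral_cmult nn_integral_add)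
  also have "\<dots> = ennreal (1/pi) * (line_energy f (x + s) + line_energy f (x - s)
      + (ennreal (1 / (2 * s)) + ennreal (1 / (2 * s))) * J)"
    using int_H[of "- s"] int_H[of s] by (simp add: int_V distrib_right add_ac)
  also have "ennreal (1 / (2 * s)) + ennreal (1 / (2 * s)) = ennreal (1 / s)"
    using s by (simp flip: ennreal_plus)
  finally show ?thesis unfolding J_def .
qed

lemma line_energy_le_submean_strip:
  assumes holo: "f holomorphic_on C_plus" and t: "0 < t" and u: "t < u" "u < 2 * t"
    and s: "s \<in> {t/4..t/2}"
  shows "line_energy f u \<le> ennreal (1/pi) * (line_energy f (u + s) + line_energy f (u - s)
           + ennreal (4 / t) * (\<integral>\<^sup>+v. line_energy f v * indicator {t/2..5*t/2} v \<partial>lborel))"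
proof -
  have "ennreal (1/s) \<le> ennreal (4/t)"
    using s t by (intro ennreal_leI) (auto simp: field_simps)
  moreover have "(\<integral>\<^sup>+v. line_energy f v * indicator {u - s..u + s} v \<partial>lborel)
      \<le> (\<integral>\<^sup>+v. line_energy f v * indicator {t/2..5*t/2} v \<partial>lborel)"
    using s u by (intro nn_integral_mono mult_left_mono) (auto simp: indicator_def)
  ultimately have "ennreal (1/s) * (\<integral>\<^sup>+v. line_energy f v * indicator {u - s..u + s} v \<partial>lborel)
      \<le> ennreal (4/t) * (\<integral>\<^sup>+v. line_energy f v * indicator {t/2..5*t/2} v \<partial>lborel)"
    by (rule mult_mono) auto
  moreover have "0 < s" "s < u"
    using s t u by auto
  ultimately show ?thesis
    using line_energy_submean[OF holo] by (meson add_left_mono mult_left_mono order_trans zero_le)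
qed

lemma line_energy_le_strip_integral:
  assumes holo: "f holomorphic_on C_plus" and t: "0 < t" and u: "t < u" "u < 2 * t"
  shows "line_energy f u \<le> ennreal (4 / t) * (\<integral>\<^sup>+v. line_energy f v * indicator {t/2..5*t/2} v \<partial>lborel)"
proof -
  note [measurable] = borel_measurable_line_energy[OF holo]
  define J where "J = (\<integral>\<^sup>+v. line_energy f v * indicator {t/2..5*t/2} v \<partial>lborel)"
  let ?S = "{t/4..t/2}"
  \<comment> \<open>average the sub-mean inequality over the radii \<open>s \<in> [t/4, t/2]\<close>\<close>
  have pointwise: "line_energy f u * indicator ?S s \<le> ennreal (1/pi) *
      (line_energy f (u + s) * indicator ?S s + line_energy f (u - s) * indicator ?S s
       + ennreal (4 / t) * J * indicator ?S s)" for s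
    using line_energy_le_submean_strip[OF holo t u, of s] by (cases "s \<in> ?S") (simp_all add: J_def)
  have shifted: "(\<integral>\<^sup>+s. line_energy f (u + c * s) * indicator ?S s \<partial>lborel) \<le> J" if c: "\<bar>c\<bar> = 1" for c
  proof -
    have "J = ennreal \<bar>c\<bar> * (\<integral>\<^sup>+s. line_energy f (u + c * s) * indicator {t/2..5*t/2} (u + c * s) \<partial>lborel)"
      unfolding J_def using c by (intro nn_integral_real_affine) auto
    moreover have "(\<integral>\<^sup>+s. line_energy f (u + c * s) * indicator ?S s \<partial>lborel)
        \<le> (\<integral>\<^sup>+s. line_energy f (u + c * s) * indicator {t/2..5*t/2} (u + c * s) \<partial>lborel)"
      using c u t by (intro nn_integral_mono mult_left_mono) (auto simp: indicator_def abs_if split: if_splits)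
    ultimately show ?thesis using c by simp
  qed
  have inv: "ennreal (4/t) * ennreal (t/4) = 1"
    using t by (simp flip: ennreal_mult)
  then have J_eq: "ennreal (4 / t) * J * ennreal (t/4) = J"
    by (metis mult.commute mult.left_commute mult_1_right)
  have "line_energy f u * ennreal (t/4) = (\<integral>\<^sup>+s. line_energy f u * indicator ?S s \<partial>lborel)"
    using t by (simp add: nn_integral_cmult_indicator mult.commute)
  also have "\<dots> \<le> (\<integral>\<^sup>+s. ennreal (1/pi) * (line_energy f (u + s) * indicator ?S s
      + line_energy f (u - s) * indicator ?S s + ennreal (4 / t) * J * indicator ?S s) \<partial>lborel)"
    by (intro nn_integral_mono pointwise)
  also have "\<dots> = ennreal (1/pi) * ((\<integral>\<^sup>+s. line_energy f (u + s) * indicator ?S s \<partial>lborel)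
      + (\<integral>\<^sup>+s. line_energy f (u - s) * indicator ?S s \<partial>lborel) + ennreal (4 / t) * J * ennreal (t/4))"
    using t by (simp add: nn_integral_cmult nn_integral_add nn_integral_cmult_indicator)
  also have "\<dots> \<le> ennreal (1/pi) * (J + J + J)"
    using shifted[of 1] shifted[of "-1"] by (simp add: J_eq add_mono mult_left_mono)
  also have "\<dots> = ennreal (1/pi) * 3 * J"
    by (simp only: numeral_Bit1 numeral_One distrib_right distrib_left mult_1 mult.assoc)
  also have "ennreal (1/pi) * 3 = ennreal (3/pi)"
    using ennreal_mult[of "1/pi" 3] by simp
  also have "ennreal (3/pi) * J \<le> 1 * J"
    using pi_gt3 by (intro mult_right_mono) (auto simp: ennreal_le_1)
  finally have "ennreal (4/t) * (line_energy f u * ennreal (t/4)) \<le> ennreal (4/t) * J"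
    by (intro mult_left_mono) simp_all
  then show ?thesis
    unfolding J_def using inv by (metis mult.commute mult.left_commute mult_1_right)
qed

lemma weighted_energy_shift_le_of_nonneg:
  assumes "0 \<le> \<alpha>" and "0 \<le> t"
  shows "weighted_energy \<alpha> t f \<le> weighted_energy \<alpha> 0 f"
  unfolding weighted_energy_def
proof (intro nn_integral_mono mult_right_mono ennreal_leI)
  fix u :: real
  show "indicator {t<..} u * (u - t) powr \<alpha> \<le> indicator {0<..} u * (u - 0) powr \<alpha>"
    using assms by (auto simp: indicator_def intro: powr_mono2)
qed simp

lemma nn_integral_line_energy_le_weighted_energy:
  assumes holo: "f holomorphic_on C_plus" and "\<alpha> \<le> 0" and "0 < p"
  shows "(\<integral>\<^sup>+v. line_energy f v * indicator {p..q} v \<partial>lborel) \<le> ennreal (q powr -\<alpha>) * weighted_energy \<alpha> 0 f"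
proof -
  have "line_energy f v * indicator {p..q} v
      \<le> ennreal (q powr -\<alpha>) * (ennreal (indicator {0<..} v * (v - 0) powr \<alpha>) * line_energy f v)" for v
  proof (cases "v \<in> {p..q}")
    case True
    then have "0 < v" using assms by auto
    then have "q powr -\<alpha> * q powr \<alpha> \<le> q powr -\<alpha> * v powr \<alpha>"
      using True assms by (intro mult_left_mono powr_mono2') auto
    then have "1 \<le> q powr -\<alpha> * (indicator {0<..} v * v powr \<alpha>)"
      using \<open>0 < v\<close> True assms by (simp add: powr_minus)
    then have "1 \<le> ennreal (q powr -\<alpha>) * ennreal (indicator {0<..} v * v powr \<alpha>)"
      by (simp add: ennreal_mult'[symmetric] ennreal_leI)
    then have "1 * line_energy f v
        \<le> ennreal (q powr -\<alpha>) * ennreal (indicator {0<..} v * v powr \<alpha>) * line_energy f v"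
      by (rule mult_right_mono) simp
    then show ?thesis
      using True by (simp add: mult.assoc)
  qed simp
  then show ?thesis
    using borel_measurable_line_energy[OF holo] unfolding weighted_energy_def
    by (subst nn_integral_cmult[symmetric]) (auto intro: nn_integral_mono)
qed

lemma nn_integral_powr_strip:
  fixes t \<alpha> :: real
  assumes "0 < t" and "-1 < \<alpha>"
  shows "(\<integral>\<^sup>+u. ennreal (indicator {t<..<2*t} u * (u - t) powr \<alpha>) \<partial>lborel)
           \<le> ennreal (t powr (\<alpha> + 1) / (\<alpha> + 1))"
proof -
  have "(\<integral>\<^sup>+u. ennreal (indicator {t<..<2*t} u * (u - t) powr \<alpha>) \<partial>lborel)
      = (\<integral>\<^sup>+v. ennreal (indicator {t<..<2*t} (t + 1 * v) * ((t + 1 * v) - t) powr \<alpha>) \<partial>lborel)"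
    using nn_integral_real_affine[of "\<lambda>u. ennreal (indicator {t<..<2*t} u * (u - t) powr \<alpha>)" 1 t] by simp
  also have "\<dots> \<le> (\<integral>\<^sup>+v. ennreal (v powr \<alpha>) * indicator {0..t} v \<partial>lborel)"
    by (auto intro!: nn_integral_mono simp: indicator_def)
  also have "\<dots> = ennreal (t powr (\<alpha> + 1) / (\<alpha> + 1))"
    using assms by (intro nn_integral_has_integral_lebesgue' has_integral_powr_from_0) auto
  finally show ?thesis .
qed

lemma strip_constant_le:
  fixes t \<alpha> :: real
  assumes t: "0 < t" and \<alpha>: "-1 < \<alpha>" "\<alpha> < 0"
  shows "4 / t * (5 * t / 2) powr -\<alpha> * (t powr (\<alpha> + 1) / (\<alpha> + 1)) \<le> 10 / (\<alpha> + 1)"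
proof -
  have "(5 * t / 2) powr -\<alpha> = (5/2) powr -\<alpha> * t powr -\<alpha>"
    using t by (simp add: powr_mult[symmetric])
  moreover have "t powr (\<alpha> + 1) = t powr \<alpha> * t"
    using t by (simp add: powr_add)
  ultimately have "4 / t * (5 * t / 2) powr -\<alpha> * (t powr (\<alpha> + 1) / (\<alpha> + 1))
      = 4 * (5/2) powr -\<alpha> * (t powr -\<alpha> * t powr \<alpha>) / (\<alpha> + 1)"
    using t by simp
  also have "\<dots> = 4 * (5/2) powr -\<alpha> / (\<alpha> + 1)"
    using t by (simp add: powr_minus)
  also have "\<dots> \<le> 4 * (5/2) powr 1 / (\<alpha> + 1)"
    using \<alpha> by (intro divide_right_mono mult_left_mono powr_mono) auto
  finally show ?thesis by simp
qed

text \<open>Near \<open>u = t\<close> the singularity of \<open>(u - t) powr \<alpha>\<close> is absorbed by the strip bound;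
  for \<open>u \<ge> 2t\<close> one has \<open>u - t \<ge> u/2\<close>.\<close>

lemma weighted_energy_integrand_le:
  assumes holo: "f holomorphic_on C_plus" and t: "0 < t" and \<alpha>: "-1 < \<alpha>" "\<alpha> < 0"
  shows "ennreal (indicator {t<..} u * (u - t) powr \<alpha>) * line_energy f u
      \<le> ennreal (indicator {t<..<2*t} u * (u - t) powr \<alpha>) *
          (ennreal (4 / t) * (\<integral>\<^sup>+v. line_energy f v * indicator {t/2..5*t/2} v \<partial>lborel))
        + ennreal 2 * (ennreal (indicator {0<..} u * (u - 0) powr \<alpha>) * line_energy f u)"
proof -
  consider "u \<le> t" | "t < u" "u < 2 * t" | "2 * t \<le> u" by linarith
  then show ?thesis
  proof cases
    case 2
    then have "line_energy f u \<le> ennreal (4 / t) * (\<integral>\<^sup>+v. line_energy f v * indicator {t/2..5*t/2} v \<partial>lborel)"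
      by (intro line_energy_le_strip_integral holo t)
    then show ?thesis using 2 by (intro add_increasing2) (auto intro: mult_left_mono)
  next
    case 3
    then have "(u - t) powr \<alpha> \<le> (u / 2) powr \<alpha>"
      using t \<alpha> by (intro powr_mono2') auto
    also have "\<dots> = 2 powr -\<alpha> * u powr \<alpha>"
      using 3 t by (simp add: powr_divide powr_minus divide_simps)
    also have "\<dots> \<le> 2 powr 1 * u powr \<alpha>"
      using \<alpha> by (intro mult_right_mono powr_mono) auto
    finally have "indicator {t<..} u * (u - t) powr \<alpha> \<le> 2 * (indicator {0<..} u * (u - 0) powr \<alpha>)"
      using 3 t by simp
    then have "ennreal (indicator {t<..} u * (u - t) powr \<alpha>)
        \<le> ennreal 2 * ennreal (indicator {0<..} u * (u - 0) powr \<alpha>)"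
      by (subst ennreal_mult[symmetric]) (auto intro: ennreal_leI)
    then show ?thesis
      by (intro add_increasing) (auto simp: mult.assoc[symmetric] intro: mult_right_mono)
  qed simp
qed

lemma weighted_energy_shift_le_of_neg:
  assumes holo: "f holomorphic_on C_plus" and t: "0 < t" and \<alpha>: "-1 < \<alpha>" "\<alpha> < 0"
  shows "weighted_energy \<alpha> t f \<le> ennreal (2 + 10 / (\<alpha> + 1)) * weighted_energy \<alpha> 0 f"
proof -
  note [measurable] = borel_measurable_line_energy[OF holo]
  define W where "W = weighted_energy \<alpha> 0 f"
  define J where "J = (\<integral>\<^sup>+v. line_energy f v * indicator {t/2..5*t/2} v \<partial>lborel)"
  define P where "P = (\<integral>\<^sup>+u. ennreal (indicator {t<..<2*t} u * (u - t) powr \<alpha>) \<partial>lborel)"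
  have "weighted_energy \<alpha> t f \<le> P * (ennreal (4 / t) * J) + ennreal 2 * W"
    unfolding weighted_energy_def W_def P_def
    by (rule order_trans[OF nn_integral_mono[OF weighted_energy_integrand_le[OF holo t \<alpha>]]])
       (simp add: J_def nn_integral_add nn_integral_cmult nn_integral_multc)
  also have "P * (ennreal (4 / t) * J)
      \<le> ennreal (t powr (\<alpha> + 1) / (\<alpha> + 1)) * (ennreal (4 / t) * (ennreal ((5 * t / 2) powr -\<alpha>) * W))"
    unfolding P_def J_def W_def using t \<alpha>
    by (intro mult_mono nn_integral_powr_strip nn_integral_line_energy_le_weighted_energy holo) auto
  also have "\<dots> = ennreal (4 / t * (5 * t / 2) powr -\<alpha> * (t powr (\<alpha> + 1) / (\<alpha> + 1))) * W"
    using t \<alpha> by (simp add: ennreal_mult'[symmetric] mult_ac)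
  also have "\<dots> \<le> ennreal (10 / (\<alpha> + 1)) * W"
    using strip_constant_le[OF t \<alpha>] by (intro mult_right_mono ennreal_leI) auto
  finally have "weighted_energy \<alpha> t f \<le> (ennreal (10 / (\<alpha> + 1)) + ennreal 2) * W"
    by (simp add: distrib_right add_right_mono)
  also have "ennreal (10 / (\<alpha> + 1)) + ennreal 2 = ennreal (2 + 10 / (\<alpha> + 1))"
    using \<alpha> by (subst ennreal_plus[symmetric]) (auto simp: add.commute)
  finally show ?thesis
    unfolding W_def .
qed

lemma weighted_energy_shift_le:
  assumes holo: "f holomorphic_on C_plus" and \<alpha>: "-1 < \<alpha>" and t: "0 \<le> t"
  shows "weighted_energy \<alpha> t f \<le> ennreal (2 + 10 / (\<alpha> + 1)) * weighted_energy \<alpha> 0 f"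
proof (cases "0 \<le> \<alpha> \<or> t = 0")
  case True
  then have "weighted_energy \<alpha> t f \<le> 1 * weighted_energy \<alpha> 0 f"
    using t weighted_energy_shift_le_of_nonneg by auto
  also have "\<dots> \<le> ennreal (2 + 10 / (\<alpha> + 1)) * weighted_energy \<alpha> 0 f"
  proof (intro mult_right_mono)
    have "0 < 10 / (\<alpha> + 1)" using \<alpha> by simp
    then show "1 \<le> ennreal (2 + 10 / (\<alpha> + 1))"
      using ennreal_leI[of 1 "2 + 10 / (\<alpha> + 1)"] by simp
  qed simp
  finally show ?thesis .
next
  case False
  with holo t \<alpha> show ?thesis
    by (intro weighted_energy_shift_le_of_neg) auto
qed

section \<open>Composition with affine maps\<close>

lemma holomorphic_on_comp_affine:
  assumes "f holomorphic_on C_plus" and "0 < A" and "0 \<le> Re c"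
  shows "(f \<circ> (\<lambda>w. of_real A * w + c)) holomorphic_on C_plus"
proof -
  have "(\<lambda>w. of_real A * w + c) ` C_plus \<subseteq> C_plus"
    using assms by (auto simp: C_plus_def intro!: add_pos_nonneg)
  then show ?thesis
    by (intro holomorphic_on_compose_gen[OF _ assms(1)] holomorphic_intros) auto
qed

lemma line_energy_comp_affine:
  assumes holo: "f holomorphic_on C_plus" and A: "0 < A" and c: "0 \<le> Re c" and x: "0 < x"
  shows "line_energy f (Re c + A * x) = ennreal A * line_energy (f \<circ> (\<lambda>w. of_real A * w + c)) x"
proof -
  note [measurable] = borel_measurable_energy_density[OF holo]
  have "line_energy f (Re c + A * x)
      = ennreal A * (\<integral>\<^sup>+y. ennreal (energy_density f (Complex (Re c + A * x) (Im c + A * y))) \<partial>lborel)"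
    unfolding line_energy_def using A by (subst nn_integral_real_affine[where c = A and t = "Im c"]) auto
  also have "(\<integral>\<^sup>+y. ennreal (energy_density f (Complex (Re c + A * x) (Im c + A * y))) \<partial>lborel)
      = line_energy (f \<circ> (\<lambda>w. of_real A * w + c)) x"
    unfolding line_energy_def
  proof (intro nn_integral_cong)
    fix y
    have "of_real A * Complex x y + c = Complex (Re c + A * x) (Im c + A * y)"
      by (simp add: complex_eq_iff)
    moreover have "0 < Re c + A * x"
      using A c x by (simp add: add_nonneg_pos)
    ultimately show "ennreal (energy_density f (Complex (Re c + A * x) (Im c + A * y)))
        = ennreal (energy_density (f \<circ> (\<lambda>w. of_real A * w + c)) (Complex x y))"
      using x by (simp add: energy_density_C_plus)
  qed
  finally show ?thesis .
qed

lemma weighted_energy_comp_affine: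
  assumes holo: "f holomorphic_on C_plus" and A: "0 < A" and c: "0 \<le> Re c"
  shows "weighted_energy \<alpha> (Re c) f = ennreal (A powr (2 + \<alpha>)) * weighted_energy \<alpha> 0 (f \<circ> (\<lambda>w. of_real A * w + c))"
proof -
  note [measurable] = borel_measurable_line_energy[OF holo]
    borel_measurable_line_energy[OF holomorphic_on_comp_affine[OF holo A c]]
  let ?g = "f \<circ> (\<lambda>w. of_real A * w + c)"
  have "weighted_energy \<alpha> (Re c) f = ennreal A *
      (\<integral>\<^sup>+x. ennreal (indicator {Re c<..} (Re c + A * x) * (Re c + A * x - Re c) powr \<alpha>)
               * line_energy f (Re c + A * x) \<partial>lborel)"
    unfolding weighted_energy_def using A by (subst nn_integral_real_affine[where c = A and t = "Re c"]) auto
  also have "(\<integral>\<^sup>+x. ennreal (indicator {Re c<..} (Re c + A * x) * (Re c + A * x - Re c) powr \<alpha>)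
               * line_energy f (Re c + A * x) \<partial>lborel)
      = (\<integral>\<^sup>+x. ennreal (A powr (1 + \<alpha>)) * (ennreal (indicator {0<..} x * (x - 0) powr \<alpha>) * line_energy ?g x) \<partial>lborel)"
  proof (intro nn_integral_cong)
    fix x :: real
    show "ennreal (indicator {Re c<..} (Re c + A * x) * (Re c + A * x - Re c) powr \<alpha>) * line_energy f (Re c + A * x)
        = ennreal (A powr (1 + \<alpha>)) * (ennreal (indicator {0<..} x * (x - 0) powr \<alpha>) * line_energy ?g x)"
    proof (cases "0 < x")
      case True
      have "ennreal (indicator {Re c<..} (Re c + A * x) * (Re c + A * x - Re c) powr \<alpha>) * line_energy f (Re c + A * x)
          = ennreal ((A * x) powr \<alpha> * A) * line_energy ?g x"
        using True A by (simp add: line_energy_comp_affine[OF holo A c True] ennreal_mult' mult.assoc)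
      also have "(A * x) powr \<alpha> * A = A powr (1 + \<alpha>) * x powr \<alpha>"
        using A True by (simp add: powr_add powr_mult)
      finally show ?thesis
        using True by (simp add: ennreal_mult' mult.assoc comp_def)
    next
      case False
      then show ?thesis using A by (simp add: zero_less_mult_iff)
    qed
  qed
  also have "\<dots> = ennreal (A powr (1 + \<alpha>)) * weighted_energy \<alpha> 0 ?g"
    unfolding weighted_energy_def by (rule nn_integral_cmult) auto
  also have "ennreal A * (ennreal (A powr (1 + \<alpha>)) * weighted_energy \<alpha> 0 ?g)
      = ennreal (A powr (2 + \<alpha>)) * weighted_energy \<alpha> 0 ?g"
    using A by (simp add: mult.assoc[symmetric] ennreal_mult'[symmetric] powr_add power2_eq_square)
  finally show ?thesis .
qed

lemma bergman_norm2_comp_affine: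
  assumes holo: "f holomorphic_on C_plus" and A: "0 < A" and c: "0 \<le> Re c"
  shows "ennreal (A powr (2 + \<alpha>)) * bergman_norm2 \<alpha> (f \<circ> (\<lambda>w. of_real A * w + c))
           = ennreal (1/pi) * weighted_energy \<alpha> (Re c) f"
  by (simp add: bergman_norm2_eq_weighted_energy[OF holomorphic_on_comp_affine[OF holo A c]]
      weighted_energy_comp_affine[OF holo A c] mult.left_commute)

lemma bergman_norm2_comp_affine_le:
  assumes holo: "f holomorphic_on C_plus" and \<alpha>: "-1 < \<alpha>" and A: "0 < A" and c: "0 \<le> Re c"
  shows "ennreal (A powr (2 + \<alpha>)) * bergman_norm2 \<alpha> (f \<circ> (\<lambda>w. of_real A * w + c))
           \<le> ennreal (2 + 10 / (\<alpha> + 1)) * bergman_norm2 \<alpha> f"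
  unfolding bergman_norm2_comp_affine[OF holo A c] bergman_norm2_eq_weighted_energy[OF holo]
  using weighted_energy_shift_le[OF holo \<alpha> c]
  by (metis mult.left_commute mult_left_mono zero_le)

lemma comp_affine_in_bergman_space:
  assumes f: "f \<in> bergman_space \<alpha>" and \<alpha>: "-1 < \<alpha>" and A: "0 < A" and c: "0 \<le> Re c"
  shows "f \<circ> (\<lambda>w. of_real A * w + c) \<in> bergman_space \<alpha>"
proof -
  have holo: "f holomorphic_on C_plus" and fin: "bergman_norm2 \<alpha> f < \<infinity>"
    using f by (auto simp: bergman_space_def)
  have "ennreal (A powr (2 + \<alpha>)) * bergman_norm2 \<alpha> (f \<circ> (\<lambda>w. of_real A * w + c)) < \<infinity>"
    using bergman_norm2_comp_affine_le[OF holo \<alpha> A c]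
    by (rule le_less_trans) (use fin in \<open>simp add: ennreal_mult_less_top\<close>)
  then show ?thesis
    using A holomorphic_on_comp_affine[OF holo A c]
    by (auto simp: bergman_space_def ennreal_mult_less_top)
qed

lemma bergman_norm_comp_affine_le:
  assumes f: "f \<in> bergman_space \<alpha>" and \<alpha>: "-1 < \<alpha>" and A: "1 \<le> A" and c: "0 \<le> Re c"
  shows "bergman_norm \<alpha> (f \<circ> (\<lambda>w. of_real A * w + c)) \<le> sqrt (2 + 10 / (\<alpha> + 1)) * bergman_norm \<alpha> f"
proof -
  define K where "K = 2 + 10 / (\<alpha> + 1)"
  have holo: "f holomorphic_on C_plus" and fin: "bergman_norm2 \<alpha> f < \<infinity>"
    using f by (auto simp: bergman_space_def)
  have "0 < K" using \<alpha> by (simp add: K_def add_pos_pos)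
  have "1 \<le> A powr (2 + \<alpha>)"
    using A \<alpha> by (intro ge_one_powr_ge_zero) auto
  then have "1 * bergman_norm2 \<alpha> (f \<circ> (\<lambda>w. of_real A * w + c))
      \<le> ennreal (A powr (2 + \<alpha>)) * bergman_norm2 \<alpha> (f \<circ> (\<lambda>w. of_real A * w + c))"
    by (intro mult_right_mono) auto
  also have "\<dots> \<le> ennreal K * bergman_norm2 \<alpha> f"
    unfolding K_def using A by (intro bergman_norm2_comp_affine_le holo \<alpha> c) auto
  finally have "enn2real (bergman_norm2 \<alpha> (f \<circ> (\<lambda>w. of_real A * w + c))) \<le> enn2real (ennreal K * bergman_norm2 \<alpha> f)"
    using fin by (intro enn2real_mono) (auto simp: ennreal_mult_less_top)
  then have "sqrt (enn2real (bergman_norm2 \<alpha> (f \<circ> (\<lambda>w. of_real A * w + c))))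
      \<le> sqrt (K * enn2real (bergman_norm2 \<alpha> f))"
    using \<open>0 < K\<close> by (simp add: enn2real_mult)
  then show ?thesis
    by (simp add: bergman_norm_def real_sqrt_mult K_def)
qed

definition test_fun :: "complex \<Rightarrow> complex" where
  "test_fun z = exp (- z) / (z + 1)"

lemma test_fun_holomorphic: "test_fun holomorphic_on C_plus"
proof -
  have "z + 1 \<noteq> 0" if "z \<in> C_plus" for z
    using that by (auto simp: C_plus_def complex_eq_iff)
  then show ?thesis
    unfolding test_fun_def[abs_def] by (intro holomorphic_intros) auto
qed

lemma energy_density_test_fun:
  assumes "0 < x"
  shows "energy_density test_fun (Complex x y) = exp (- x)^2 / ((x + 1)^2 + y^2)"
proof -
  have "(cmod (Complex x y + 1))^2 = (x + 1)^2 + y^2"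
    by (simp add: cmod_def)
  then show ?thesis
    using assms by (simp add: energy_density_C_plus test_fun_def norm_divide power_divide)
qed

lemma nn_integral_inverse_1_plus_square_finite:
  "(\<integral>\<^sup>+y. ennreal (inverse (1 + y^2)) \<partial>lborel) < \<infinity>"
proof -
  have "integrable lborel (\<lambda>y::real. inverse (1 + y^2))"
    using integrable_inverse_1_plus_square by (simp add: set_integrable_def einterval_eq_UNIV)
  then show ?thesis
    by (simp add: integrable_iff_bounded add_pos_nonneg)
qed

lemma line_energy_test_fun_le:
  assumes x: "0 < x"
  shows "line_energy test_fun x \<le> ennreal (exp (- x)) * (\<integral>\<^sup>+y. ennreal (inverse (1 + y^2)) \<partial>lborel)"
proof -
  have "line_energy test_fun x \<le> (\<integral>\<^sup>+y. ennreal (exp (- x)) * ennreal (inverse (1 + y^2)) \<partial>lborel)"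
    unfolding line_energy_def
  proof (intro nn_integral_mono)
    fix y :: real
    have "exp (- x)^2 \<le> exp (- x)"
      using x by (simp add: power2_eq_square mult_le_cancel_right1)
    moreover have "1 + y^2 \<le> (x + 1)^2 + y^2"
      using x by (simp add: one_le_power)
    ultimately have "exp (- x)^2 / ((x + 1)^2 + y^2) \<le> exp (- x) / (1 + y^2)"
      by (intro frac_le) (auto simp: add_pos_nonneg)
    then show "ennreal (energy_density test_fun (Complex x y)) \<le> ennreal (exp (- x)) * ennreal (inverse (1 + y^2))"
      using x by (simp add: energy_density_test_fun ennreal_mult'[symmetric] divide_inverse ennreal_leI)
  qed
  also have "\<dots> = ennreal (exp (- x)) * (\<integral>\<^sup>+y. ennreal (inverse (1 + y^2)) \<partial>lborel)"
    by (rule nn_integral_cmult) auto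
  finally show ?thesis .
qed

lemma test_fun_in_bergman_space:
  assumes \<alpha>: "-1 < \<alpha>"
  shows "test_fun \<in> bergman_space \<alpha>"
proof -
  define Q where "Q = (\<integral>\<^sup>+y. ennreal (inverse (1 + y^2)) \<partial>lborel)"
  have "weighted_energy \<alpha> 0 test_fun
      \<le> (\<integral>\<^sup>+x. ennreal (indicator {0..} x * x powr ((\<alpha> + 1) - 1) / exp x) * Q \<partial>lborel)"
    unfolding weighted_energy_def
  proof (intro nn_integral_mono)
    fix x :: real
    show "ennreal (indicator {0<..} x * (x - 0) powr \<alpha>) * line_energy test_fun x
        \<le> ennreal (indicator {0..} x * x powr ((\<alpha> + 1) - 1) / exp x) * Q"
    proof (cases "0 < x")
      case True
      then have "ennreal (indicator {0<..} x * (x - 0) powr \<alpha>) * line_energy test_fun x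
          \<le> ennreal (x powr \<alpha>) * (ennreal (exp (- x)) * Q)"
        unfolding Q_def by (auto intro: mult_left_mono line_energy_test_fun_le)
      also have "\<dots> = ennreal (indicator {0..} x * x powr ((\<alpha> + 1) - 1) / exp x) * Q"
        using True by (simp add: ennreal_mult'[symmetric] mult.assoc exp_minus field_simps)
      finally show ?thesis .
    qed simp
  qed
  also have "\<dots> = ennreal (Gamma (\<alpha> + 1)) * Q"
    using Gamma_conv_nn_integral_real[of "\<alpha> + 1"] \<alpha> by (simp add: nn_integral_multc)
  also have "\<dots> < \<infinity>"
    using nn_integral_inverse_1_plus_square_finite by (simp add: Q_def ennreal_mult_less_top)
  finally show ?thesis
    by (simp add: bergman_space_def test_fun_holomorphic bergman_norm2_eq_weighted_energy[OF test_fun_holomorphic]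
        ennreal_mult_less_top)
qed

lemma line_energy_test_fun_ge:
  assumes u: "0 < u" "u \<le> v"
  shows "ennreal (exp (- v)^2 / ((v + 1)^2 + 1)) \<le> line_energy test_fun u"
proof -
  have "ennreal (exp (- v)^2 / ((v + 1)^2 + 1))
      = (\<integral>\<^sup>+(y::real). ennreal (exp (- v)^2 / ((v + 1)^2 + 1)) * indicator {0..1} y \<partial>lborel)"
    by (simp add: nn_integral_cmult_indicator)
  also have "\<dots> \<le> line_energy test_fun u"
    unfolding line_energy_def
  proof (intro nn_integral_mono)
    fix y :: real
    show "ennreal (exp (- v)^2 / ((v + 1)^2 + 1)) * indicator {0..1} y
        \<le> ennreal (energy_density test_fun (Complex u y))"
    proof (cases "y \<in> {0..1}")
      case True
      then have "(u + 1)^2 + y^2 \<le> (v + 1)^2 + 1"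
        using u by (intro add_mono power_mono) (auto simp: power_le_one)
      then have "exp (- v)^2 / ((v + 1)^2 + 1) \<le> exp (- u)^2 / ((u + 1)^2 + y^2)"
        using u by (intro frac_le power_mono) (auto simp: add_pos_nonneg)
      then show ?thesis using True u by (simp add: energy_density_test_fun)
    qed simp
  qed
  finally show ?thesis .
qed

lemma min_one_powr_le:
  fixes x X \<alpha> :: real
  assumes "1 \<le> x" and "x \<le> X"
  shows "min 1 (X powr \<alpha>) \<le> x powr \<alpha>"
proof (cases "0 \<le> \<alpha>")
  case True
  then show ?thesis
    using assms by (simp add: ge_one_powr_ge_zero min.coboundedI1)
next
  case False
  then have "X powr \<alpha> \<le> x powr \<alpha>"
    using assms by (intro powr_mono2') auto
  then show ?thesis
    by (simp add: min.coboundedI2)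
qed

lemma weighted_energy_test_fun_ge:
  assumes R: "0 \<le> R"
  obtains e where "0 < e" and "\<And>t. 0 \<le> t \<Longrightarrow> t \<le> R \<Longrightarrow> ennreal e \<le> weighted_energy \<alpha> t test_fun"
proof -
  define m where "m = min 1 ((R + 2) powr \<alpha>)"
  define d where "d = exp (- (R + 2))^2 / ((R + 2 + 1)^2 + 1)"
  have "0 < m" "0 < d"
    using R by (auto simp: m_def d_def add_pos_nonneg)
  have "ennreal (m * d) \<le> weighted_energy \<alpha> t test_fun" if t: "0 \<le> t" "t \<le> R" for t
  proof -
    have "ennreal (m * d) = (\<integral>\<^sup>+u. ennreal (m * d) * indicator {R+1..R+2} u \<partial>lborel)"
      by (simp add: nn_integral_cmult_indicator)
    also have "\<dots> \<le> weighted_energy \<alpha> t test_fun"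
      unfolding weighted_energy_def
    proof (intro nn_integral_mono)
      fix u :: real
      show "ennreal (m * d) * indicator {R+1..R+2} u
          \<le> ennreal (indicator {t<..} u * (u - t) powr \<alpha>) * line_energy test_fun u"
      proof (cases "u \<in> {R+1..R+2}")
        case True
        then have ut: "t < u" "1 \<le> u - t" "u - t \<le> R + 2" "0 < u"
          using t R by auto
        have "m \<le> (u - t) powr \<alpha>"
          unfolding m_def using ut by (intro min_one_powr_le) auto
        moreover have "ennreal d \<le> line_energy test_fun u"
          unfolding d_def using True ut by (intro line_energy_test_fun_ge) auto
        ultimately have "ennreal m * ennreal d \<le> ennreal ((u - t) powr \<alpha>) * line_energy test_fun u"
          by (intro mult_mono ennreal_leI) auto
        then show ?thesis
          using True ut \<open>0 < m\<close> \<open>0 < d\<close> by (simp add: ennreal_mult)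
      qed simp
    qed
    finally show ?thesis .
  qed
  then show thesis
    using that \<open>0 < m\<close> \<open>0 < d\<close> by (meson mult_pos_pos)
qed

lemma bergman_norm_comp_affine_test_fun_ge:
  assumes \<alpha>: "-1 < \<alpha>" and R: "0 \<le> R"
  obtains e where "0 < e"
    and "\<And>A c. 0 < A \<Longrightarrow> 0 \<le> Re c \<Longrightarrow> Re c \<le> R \<Longrightarrow>
           e \<le> A powr ((2 + \<alpha>) / 2) * bergman_norm \<alpha> (test_fun \<circ> (\<lambda>w. of_real A * w + c))"
proof -
  obtain d where d: "0 < d" "\<And>t. 0 \<le> t \<Longrightarrow> t \<le> R \<Longrightarrow> ennreal d \<le> weighted_energy \<alpha> t test_fun"
    using weighted_energy_test_fun_ge[OF R] by blast
  have "sqrt (d / pi) \<le> A powr ((2 + \<alpha>) / 2) * bergman_norm \<alpha> (test_fun \<circ> (\<lambda>w. of_real A * w + c))"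
    if A: "0 < A" and c: "0 \<le> Re c" "Re c \<le> R" for A c
  proof -
    let ?g = "test_fun \<circ> (\<lambda>w. of_real A * w + c)"
    have "ennreal (d / pi) = ennreal (1/pi) * ennreal d"
      by (simp flip: ennreal_mult')
    also have "\<dots> \<le> ennreal (1/pi) * weighted_energy \<alpha> (Re c) test_fun"
      using d c by (intro mult_left_mono) auto
    also have "\<dots> = ennreal (A powr (2 + \<alpha>)) * bergman_norm2 \<alpha> ?g"
      by (rule bergman_norm2_comp_affine[OF test_fun_holomorphic A c(1), symmetric])
    finally have "ennreal (d / pi) \<le> ennreal (A powr (2 + \<alpha>)) * bergman_norm2 \<alpha> ?g" .
    moreover have "ennreal (A powr (2 + \<alpha>)) * bergman_norm2 \<alpha> ?g < \<infinity>"
      using comp_affine_in_bergman_space[OF test_fun_in_bergman_space[OF \<alpha>] \<alpha> A c(1)]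
      by (simp add: bergman_space_def ennreal_mult_less_top)
    ultimately have "enn2real (ennreal (d / pi)) \<le> enn2real (ennreal (A powr (2 + \<alpha>)) * bergman_norm2 \<alpha> ?g)"
      by (simp add: enn2real_mono infinity_ennreal_def)
    then have "d / pi \<le> A powr (2 + \<alpha>) * enn2real (bergman_norm2 \<alpha> ?g)"
      using d by (simp add: enn2real_mult)
    then have "sqrt (d / pi) \<le> sqrt (A powr (2 + \<alpha>) * enn2real (bergman_norm2 \<alpha> ?g))"
      by (rule real_sqrt_le_mono)
    then have "sqrt (d / pi) \<le> sqrt (A powr (2 + \<alpha>)) * bergman_norm \<alpha> ?g"
      by (simp add: bergman_norm_def real_sqrt_mult)
    then show ?thesis
      using A by (simp add: powr_half_sqrt_powr)
  qed
  moreover have "0 < sqrt (d / pi)"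
    using d by simp
  ultimately show thesis
    using that by blast
qed

section \<open>Affine composition operators\<close>

lemma comp_op_affine_iterate:
  "(comp_op (\<lambda>w. of_real a * w + b) ^^ j) f
     = f \<circ> (\<lambda>w. of_real (a ^ j) * w + b * of_real (\<Sum>i<j. a ^ i))"
proof (induction j)
  case 0
  then show ?case by (simp add: comp_def)
next
  case (Suc j)
  then show ?case
    by (simp add: comp_op_def comp_def algebra_simps)
qed

lemma comp_op_affine_abs_cesaro_bounded:
  assumes \<alpha>: "-1 < \<alpha>" and a: "1 \<le> a" and b: "0 \<le> Re b"
  shows "abs_cesaro_bounded (bergman_space \<alpha>) (bergman_norm \<alpha>) (comp_op (\<lambda>w. of_real a * w + b))"
proof (rule abs_cesaro_boundedI_power_bounded)
  show "0 < sqrt (2 + 10 / (\<alpha> + 1))"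
    using \<alpha> by (simp add: add_pos_pos)
  fix f and j :: nat
  assume "f \<in> bergman_space \<alpha>"
  moreover have "0 \<le> Re (b * of_real (\<Sum>i<j. a ^ i))"
    using a b by (simp add: sum_nonneg)
  ultimately show "bergman_norm \<alpha> ((comp_op (\<lambda>w. of_real a * w + b) ^^ j) f)
      \<le> sqrt (2 + 10 / (\<alpha> + 1)) * bergman_norm \<alpha> f"
    unfolding comp_op_affine_iterate using \<alpha> a by (intro bergman_norm_comp_affine_le one_le_power) auto
qed

lemma comp_op_affine_not_abs_cesaro_bounded:
  assumes \<alpha>: "-1 < \<alpha>" and a: "0 < a" "a < 1" and b: "0 \<le> Re b"
  shows "\<not> abs_cesaro_bounded (bergman_space \<alpha>) (bergman_norm \<alpha>) (comp_op (\<lambda>w. of_real a * w + b))"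
proof -
  define c where "c j = b * of_real (\<Sum>i<j. a ^ i)" for j
  have Re_c: "0 \<le> Re (c j)" "Re (c j) \<le> Re b / (1 - a)" for j
  proof -
    have "(\<Sum>i<j. a ^ i) = (1 - a ^ j) / (1 - a)"
      using a by (simp add: sum_gp_strict)
    also have "\<dots> \<le> 1 / (1 - a)"
      using a by (intro divide_right_mono) auto
    finally have "Re b * (\<Sum>i<j. a ^ i) \<le> Re b * (1 / (1 - a))"
      using b by (rule mult_left_mono)
    then show "Re (c j) \<le> Re b / (1 - a)"
      by (simp add: c_def)
    show "0 \<le> Re (c j)"
      using a b by (simp add: c_def sum_nonneg)
  qed
  obtain e where e: "0 < e" "\<And>A c'. 0 < A \<Longrightarrow> 0 \<le> Re c' \<Longrightarrow> Re c' \<le> Re b / (1 - a) \<Longrightarrow>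
      e \<le> A powr ((2 + \<alpha>) / 2) * bergman_norm \<alpha> (test_fun \<circ> (\<lambda>w. of_real A * w + c'))"
    using bergman_norm_comp_affine_test_fun_ge[OF \<alpha>, of "Re b / (1 - a)"] a b by auto
  define r where "r = a powr ((2 + \<alpha>) / 2)"
  have r: "0 < r" "r < 1"
    using a \<alpha> powr_less_mono2[of "(2 + \<alpha>) / 2" a 1] by (auto simp: r_def)
  have "e * (1 / r) ^ j \<le> bergman_norm \<alpha> ((comp_op (\<lambda>w. of_real a * w + b) ^^ j) test_fun)" for j
  proof -
    have "(a ^ j) powr ((2 + \<alpha>) / 2) = r ^ j"
      using a by (simp add: r_def powr_power powr_powr mult.commute flip: powr_realpow)
    then have "e \<le> r ^ j * bergman_norm \<alpha> ((comp_op (\<lambda>w. of_real a * w + b) ^^ j) test_fun)"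
      using e(2)[of "a ^ j" "c j"] a Re_c by (simp add: comp_op_affine_iterate c_def)
    then show ?thesis
      using r by (simp add: power_one_over field_simps)
  qed
  moreover have "1 < 1 / r"
    using r by simp
  ultimately show ?thesis
    by (rule not_abs_cesaro_bounded_exponential_orbit[OF test_fun_in_bergman_space[OF \<alpha>] e(1), rotated])
qed

theorem mainTheorem9:
  fixes \<alpha> a :: real and b :: complex
  assumes "\<alpha> > -1" and "a > 0" and "Re b \<ge> 0"
  shows "abs_cesaro_bounded (bergman_space \<alpha>) (bergman_norm \<alpha>)
           (comp_op (\<lambda>w. of_real a * w + b)) \<longleftrightarrow> a \<ge> 1"
proof (cases "1 \<le> a")
  case True
  with assms show ?thesis
    by (simp add: comp_op_affine_abs_cesaro_bounded)
next
  case False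
  with assms show ?thesis
    using comp_op_affine_not_abs_cesaro_bounded[of \<alpha> a b] by simp
qed

end
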